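(* For all integers $m,n\ge 2$, \[ a(m+n-2)\le \tfrac{1}{6}\,a(m)\,a(n). \] Consequently, for every $n\ge 3$, \[ s\le \left(\frac{a(n)}{6}\right)^{\frac{1}{n-2}}. \]
   Context: Let $\Sigma=\{0,1,2\}$. A word is a finite string of letters from $\Sigma$, and its length is its number of letters. A word $w$ is square-free if it cannot be written as $w=xyyz$ with words $x,y,z$ and $y$ nonempty. $\mathcal{A}(n)$ denotes the set of square-free words of length $n$ over $\Sigma$, and $a(n)=|\mathcal{A}(n)|$. The limit $s=\lim_{n\to\infty}a(n)^{1/n}$ exists; it is the growth rate of ternary square-free words. *)

theory Defs
  imports Complex_Main
begin

definition ternary_word :: "nat list \<Rightarrow> bool" where
  "ternary_word w \<longleftrightarrow> set w \<subseteq> {0, 1, 2}"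

definition square_free :: "'a list \<Rightarrow> bool" where
  "square_free w \<longleftrightarrow> \<not> (\<exists>x y z. y \<noteq> [] \<and> w = x @ y @ y @ z)"

definition sqf_words :: "nat \<Rightarrow> nat list set" where
  "sqf_words n = {w. ternary_word w \<and> length w = n \<and> square_free w}"

definition a :: "nat \<Rightarrow> nat" where
  "a n = card (sqf_words n)"

definition growth_rate :: real where
  "growth_rate = lim (\<lambda>n. root n (real (a n)))"

end

theory Submission
  imports Defs "HOL-Real_Asymp.Real_Asymp"
begin

text \<open>Permuting the three letters preserves square-freeness, and any ordered pair of distinct
  letters can be moved to \<open>0 1\<close>; hence \<open>a n\<close> is six times the number of square-free words
  reading \<open>0 1\<close> at any fixed pair of adjacent positions.  A word of length \<open>m + n - 2\<close> reading
  \<open>0 1\<close> at positions \<open>m - 2, m - 1\<close> is determined by its prefix of length \<open>m\<close> and its suffix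
  of length \<open>n\<close>, which read \<open>0 1\<close> at their end and at their start respectively.  This gives
  \<open>6 a(m + n - 2) \<le> a m * a n\<close>, i.e. \<open>b k = a (k + 2) / 6\<close> is submultiplicative, and Fekete's
  lemma identifies the growth rate with \<open>inf b(k)^(1/k)\<close>.\<close>

section \<open>Square-free words\<close>

lemma square_free_map_imp_square_free:
  assumes "square_free (map f w)"
  shows "square_free w"
  unfolding square_free_def
proof
  assume "\<exists>x y z. y \<noteq> [] \<and> w = x @ y @ y @ z"
  then obtain x y z where "y \<noteq> []" "w = x @ y @ y @ z" by blast
  then have "map f y \<noteq> []" "map f w = map f x @ map f y @ map f y @ map f z" by simp_all
  with assms show False unfolding square_free_def by blast
qed

lemma square_free_take: "square_free w \<Longrightarrow> square_free (take k w)"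
  unfolding square_free_def by (metis append.assoc append_take_drop_id)

lemma square_free_drop: "square_free w \<Longrightarrow> square_free (drop k w)"
  unfolding square_free_def by (metis append.assoc append_take_drop_id)

lemma square_free_nth_neq_Suc:
  assumes "square_free w" "Suc i < length w"
  shows "w ! i \<noteq> w ! Suc i"
proof
  assume eq: "w ! i = w ! Suc i"
  have "drop i w = [w ! i] @ [w ! Suc i] @ drop (Suc (Suc i)) w"
    using assms(2) by (simp add: Cons_nth_drop_Suc)
  then have "w = take i w @ [w ! i] @ [w ! i] @ drop (Suc (Suc i)) w"
    unfolding eq by (metis append_take_drop_id)
  then show False
    using assms(1) unfolding square_free_def by blast
qed

lemma take_drop_eq_imp_eq:
  assumes "k \<le> m" "take m xs = take m ys" "drop k xs = drop k ys"
  shows "xs = ys"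
  by (metis assms append_take_drop_id min.absorb1 take_take)

lemma finite_sqf_words: "finite (sqf_words n)"
proof (rule finite_subset)
  show "sqf_words n \<subseteq> {w. set w \<subseteq> {0, 1, 2} \<and> length w = n}"
    unfolding sqf_words_def ternary_word_def by blast
qed (simp add: finite_lists_length_eq)

lemma sqf_words_take: "w \<in> sqf_words n \<Longrightarrow> m \<le> n \<Longrightarrow> take m w \<in> sqf_words m"
  unfolding sqf_words_def ternary_word_def
  by (auto simp: square_free_take dest: in_set_takeD)

lemma sqf_words_drop: "w \<in> sqf_words n \<Longrightarrow> drop k w \<in> sqf_words (n - k)"
  unfolding sqf_words_def ternary_word_def
  by (auto simp: square_free_drop dest: in_set_dropD)

definition letter_pairs :: "(nat \<times> nat) set" where
  "letter_pairs = {(x, y). x \<in> {0, 1, 2} \<and> y \<in> {0, 1, 2} \<and> x \<noteq> y}"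

lemma letter_pairs_eq: "letter_pairs = {(0, 1), (0, 2), (1, 0), (1, 2), (2, 0), (2, 1)}"
  unfolding letter_pairs_def by auto

lemma card_letter_pairs: "card letter_pairs = 6"
  unfolding letter_pairs_eq by simp

text \<open>For \<open>p \<in> letter_pairs\<close>, \<open>3 - fst p - snd p\<close> is the remaining letter, so \<open>relabel p\<close>
  is a permutation of the alphabet, with inverse \<open>unlabel p\<close>.\<close>

definition relabel :: "nat \<times> nat \<Rightarrow> nat \<Rightarrow> nat" where
  "relabel p c = (if c = 0 then fst p else if c = 1 then snd p else 3 - fst p - snd p)"

definition unlabel :: "nat \<times> nat \<Rightarrow> nat \<Rightarrow> nat" where
  "unlabel p c = (if c = fst p then 0 else if c = snd p then 1 else 2)"

lemma relabel_in_alphabet: "p \<in> letter_pairs \<Longrightarrow> relabel p c \<in> {0, 1, 2}"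
  unfolding letter_pairs_eq relabel_def by auto

lemma unlabel_relabel: "p \<in> letter_pairs \<Longrightarrow> c \<in> {0, 1, 2} \<Longrightarrow> unlabel p (relabel p c) = c"
  unfolding letter_pairs_eq relabel_def unlabel_def by auto

lemma relabel_unlabel: "p \<in> letter_pairs \<Longrightarrow> c \<in> {0, 1, 2} \<Longrightarrow> relabel p (unlabel p c) = c"
  unfolding letter_pairs_eq relabel_def unlabel_def by auto

lemma map_unlabel_relabel:
  "p \<in> letter_pairs \<Longrightarrow> ternary_word w \<Longrightarrow> map (unlabel p) (map (relabel p) w) = w"
  unfolding ternary_word_def by (induction w) (auto simp: unlabel_relabel)

lemma map_relabel_unlabel:
  "p \<in> letter_pairs \<Longrightarrow> ternary_word w \<Longrightarrow> map (relabel p) (map (unlabel p) w) = w"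
  unfolding ternary_word_def by (induction w) (auto simp: relabel_unlabel)

lemma relabel_sqf_words:
  assumes p: "p \<in> letter_pairs" and w: "w \<in> sqf_words n"
  shows "map (relabel p) w \<in> sqf_words n"
proof -
  from w have "ternary_word w" "length w = n" "square_free w"
    by (simp_all add: sqf_words_def)
  then have "square_free (map (relabel p) w)"
    using square_free_map_imp_square_free[of "unlabel p" "map (relabel p) w"]
    by (metis map_unlabel_relabel[OF p])
  moreover have "ternary_word (map (relabel p) w)"
    unfolding ternary_word_def set_map by (rule image_subsetI) (rule relabel_in_alphabet[OF p])
  ultimately show ?thesis
    using \<open>length w = n\<close> by (simp add: sqf_words_def)
qed

lemma unlabel_sqf_words:
  assumes p: "p \<in> letter_pairs" and w: "w \<in> sqf_words n"
  shows "map (unlabel p) w \<in> sqf_words n"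
proof -
  from w have "ternary_word w" "length w = n" "square_free w"
    by (simp_all add: sqf_words_def)
  then have "square_free (map (unlabel p) w)"
    using square_free_map_imp_square_free[of "relabel p" "map (unlabel p) w"]
    by (metis map_relabel_unlabel[OF p])
  then show ?thesis
    using \<open>length w = n\<close> by (auto simp: sqf_words_def ternary_word_def unlabel_def)
qed

definition sqf_words_01 :: "nat \<Rightarrow> nat \<Rightarrow> nat list set" where
  "sqf_words_01 n i = {w \<in> sqf_words n. w ! i = 0 \<and> w ! Suc i = 1}"

lemma adjacent_letters_in_letter_pairs:
  assumes w: "w \<in> sqf_words n" and i: "Suc i < n"
  shows "(w ! i, w ! Suc i) \<in> letter_pairs"
proof -
  from w i have "w ! i \<in> set w" "w ! Suc i \<in> set w" "w ! i \<noteq> w ! Suc i"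
    by (auto simp: sqf_words_def square_free_nth_neq_Suc)
  with w show ?thesis
    unfolding sqf_words_def ternary_word_def letter_pairs_def by auto
qed

lemma bij_betw_relabel_sqf_words_01:
  assumes i: "Suc i < n"
  shows "bij_betw (\<lambda>(p, u). map (relabel p) u) (letter_pairs \<times> sqf_words_01 n i) (sqf_words n)"
proof -
  let ?pair = "\<lambda>w. (w ! i, w ! Suc i)"
  let ?normalize = "\<lambda>w. (?pair w, map (unlabel (?pair w)) w)"
  show ?thesis
  proof (rule bij_betw_byWitness[where f' = ?normalize])
    show "\<forall>q \<in> letter_pairs \<times> sqf_words_01 n i. ?normalize (case q of (p, u) \<Rightarrow> map (relabel p) u) = q"
    proof
      fix q assume "q \<in> letter_pairs \<times> sqf_words_01 n i"
      then obtain p u where q: "q = (p, u)" and p: "p \<in> letter_pairs" and u: "u \<in> sqf_words_01 n i"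
        by blast
      from u have "ternary_word u" "length u = n" "u ! i = 0" "u ! Suc i = 1"
        by (auto simp: sqf_words_01_def sqf_words_def)
      with i have pair: "map (relabel p) u ! i = fst p" "map (relabel p) u ! Suc i = snd p"
        by (simp_all add: relabel_def)
      show "?normalize (case q of (p, u) \<Rightarrow> map (relabel p) u) = q"
        by (simp only: q case_prod_conv pair prod.collapse map_unlabel_relabel[OF p \<open>ternary_word u\<close>])
    qed
    show "\<forall>w \<in> sqf_words n. (case ?normalize w of (p, u) \<Rightarrow> map (relabel p) u) = w"
    proof
      fix w assume w: "w \<in> sqf_words n"
      then have "ternary_word w" by (simp add: sqf_words_def)
      show "(case ?normalize w of (p, u) \<Rightarrow> map (relabel p) u) = w"
        by (simp only: case_prod_conv map_relabel_unlabel[OF adjacent_letters_in_letter_pairs[OF w i] \<open>ternary_word w\<close>])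
    qed
    show "(\<lambda>(p, u). map (relabel p) u) ` (letter_pairs \<times> sqf_words_01 n i) \<subseteq> sqf_words n"
      by (auto simp: sqf_words_01_def relabel_sqf_words)
    show "?normalize ` sqf_words n \<subseteq> letter_pairs \<times> sqf_words_01 n i"
    proof (rule image_subsetI)
      fix w assume w: "w \<in> sqf_words n"
      have p: "?pair w \<in> letter_pairs"
        using adjacent_letters_in_letter_pairs[OF w i] .
      then have "w ! i \<noteq> w ! Suc i"
        by (simp add: letter_pairs_def)
      moreover have "length w = n"
        using w by (simp add: sqf_words_def)
      ultimately have "map (unlabel (?pair w)) w \<in> sqf_words_01 n i"
        using i unlabel_sqf_words[OF p w] by (simp add: sqf_words_01_def unlabel_def)
      with p show "?normalize w \<in> letter_pairs \<times> sqf_words_01 n i"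
        by simp
    qed
  qed
qed

lemma a_eq_card_sqf_words_01:
  assumes "Suc i < n"
  shows "a n = 6 * card (sqf_words_01 n i)"
proof -
  have "card (letter_pairs \<times> sqf_words_01 n i) = card (sqf_words n)"
    by (rule bij_betw_same_card[OF bij_betw_relabel_sqf_words_01[OF assms]])
  then show ?thesis by (simp add: a_def card_cartesian_product card_letter_pairs)
qed

lemma sqf_words_01_take:
  assumes "w \<in> sqf_words_01 n (m - 2)" "2 \<le> m" "m \<le> n"
  shows "take m w \<in> sqf_words_01 m (m - 2)"
  using assms sqf_words_take[of w n m] by (auto simp: sqf_words_01_def Suc_diff_Suc numeral_2_eq_2)

lemma sqf_words_01_drop:
  assumes "w \<in> sqf_words_01 n k" "Suc k < n"
  shows "drop k w \<in> sqf_words_01 (n - k) 0"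
  using assms sqf_words_drop[of w n k] by (auto simp: sqf_words_01_def sqf_words_def)

lemma card_sqf_words_01_concat_le:
  assumes m: "2 \<le> m" and n: "2 \<le> n"
  shows "card (sqf_words_01 (m + n - 2) (m - 2))
    \<le> card (sqf_words_01 m (m - 2)) * card (sqf_words_01 n 0)"
proof -
  let ?split = "\<lambda>w. (take m w, drop (m - 2) w)"
  have "inj_on ?split (sqf_words_01 (m + n - 2) (m - 2))"
    by (rule inj_onI) (simp add: take_drop_eq_imp_eq[of "m - 2" m])
  moreover have "?split ` sqf_words_01 (m + n - 2) (m - 2) \<subseteq> sqf_words_01 m (m - 2) \<times> sqf_words_01 n 0"
  proof (rule image_subsetI)
    fix w assume w: "w \<in> sqf_words_01 (m + n - 2) (m - 2)"
    have "Suc (m - 2) < m + n - 2" and length_suffix: "m + n - 2 - (m - 2) = n"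
      using m n by simp_all
    from sqf_words_01_drop[OF w this(1)] have "drop (m - 2) w \<in> sqf_words_01 n 0"
      unfolding length_suffix .
    moreover have "take m w \<in> sqf_words_01 m (m - 2)"
      using sqf_words_01_take[OF w m] n by simp
    ultimately show "?split w \<in> sqf_words_01 m (m - 2) \<times> sqf_words_01 n 0"
      by simp
  qed
  moreover have "finite (sqf_words_01 m (m - 2) \<times> sqf_words_01 n 0)"
    by (simp add: sqf_words_01_def finite_sqf_words)
  ultimately have "card (sqf_words_01 (m + n - 2) (m - 2))
      \<le> card (sqf_words_01 m (m - 2) \<times> sqf_words_01 n 0)"
    by (rule card_inj_on_le)
  then show ?thesis
    by (simp only: card_cartesian_product)
qed

lemma a_submultiplicative:
  assumes "2 \<le> m" "2 \<le> n"
  shows "6 * a (m + n - 2) \<le> a m * a n"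
proof -
  have "6 * a (m + n - 2) = 36 * card (sqf_words_01 (m + n - 2) (m - 2))"
    using assms a_eq_card_sqf_words_01[of "m - 2" "m + n - 2"] by simp
  also have "\<dots> \<le> 36 * (card (sqf_words_01 m (m - 2)) * card (sqf_words_01 n 0))"
    using card_sqf_words_01_concat_le[OF assms] by simp
  also have "\<dots> = a m * a n"
    using assms a_eq_card_sqf_words_01[of "m - 2" m] a_eq_card_sqf_words_01[of 0 n] by simp
  finally show ?thesis .
qed

lemma a_eq_0_mono:
  assumes "a m = 0" "m \<le> n"
  shows "a n = 0"
proof (rule ccontr)
  assume "a n \<noteq> 0"
  then obtain w where "w \<in> sqf_words n"
    unfolding a_def by (metis card.empty ex_in_conv)
  then have "take m w \<in> sqf_words m"
    using assms(2) by (rule sqf_words_take)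
  then show False
    using assms(1) finite_sqf_words[of m] unfolding a_def by auto
qed

lemma a_ge_6: "2 \<le> n \<Longrightarrow> a n \<noteq> 0 \<Longrightarrow> 6 \<le> a n"
  using a_eq_card_sqf_words_01[of 0 n] by simp

section \<open>Fekete's lemma\<close>

lemma root_power_eq_powr:
  fixes x :: real
  assumes "0 < n" "0 < x"
  shows "root n (x ^ k) = x powr (real k / real n)"
  using assms by (simp add: root_powr_inverse powr_realpow [symmetric] powr_powr)

lemma submultiplicative_power_le:
  fixes b :: "nat \<Rightarrow> real"
  assumes nonneg: "\<And>k. 0 \<le> b k" and sub: "\<And>i j. b (i + j) \<le> b i * b j"
  shows "b (q * K + r) \<le> b K ^ q * b r"
proof (induction q)
  case (Suc q)
  have "b (Suc q * K + r) = b (K + (q * K + r))"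
    by (simp add: algebra_simps)
  also have "\<dots> \<le> b K * b (q * K + r)"
    by (rule sub)
  also have "\<dots> \<le> b K * (b K ^ q * b r)"
    using Suc nonneg by (rule mult_left_mono)
  finally show ?case
    by simp
qed simp

lemma fekete_submultiplicative:
  fixes b :: "nat \<Rightarrow> real"
  assumes ge_1: "\<And>k. 1 \<le> b k" and sub: "\<And>i j. b (i + j) \<le> b i * b j"
  shows "(\<lambda>k. root k (b k)) \<longlonglongrightarrow> (INF k\<in>{1..}. root k (b k))"
proof -
  define L where "L = (INF k\<in>{1..}. root k (b k))"
  have nonneg: "0 \<le> b k" for k
    using ge_1 order_trans zero_le_one by blast
  have L_le: "L \<le> root k (b k)" if "1 \<le> k" for k
    unfolding L_def using that nonneg
    by (intro cInf_lower bdd_belowI2[where m = 0]) (auto intro: real_root_ge_zero)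
  have "(\<lambda>k. root k (b k)) \<longlonglongrightarrow> L"
  proof (rule order_tendstoI)
    fix c assume "c < L"
    show "\<forall>\<^sub>F k in sequentially. c < root k (b k)"
      using eventually_ge_at_top[of 1]
      by eventually_elim (use \<open>c < L\<close> L_le in \<open>auto intro: less_le_trans\<close>)
  next
    fix c assume "L < c"
    then obtain K where K: "1 \<le> K" "root K (b K) < c"
      using cInf_lessD[of "(\<lambda>k. root k (b k)) ` {1..}" c] unfolding L_def by auto
    define M where "M = (\<Sum>r<K. b r)"
    have b_le_M: "b r \<le> M" if "r < K" for r
      unfolding M_def using that nonneg by (intro member_le_sum) auto
    have "0 < M"
      using b_le_M[of 0] ge_1[of 0] K(1) by linarith
    have upper: "root n (b n) \<le> root n M * root K (b K)" if "1 \<le> n" for n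
    proof -
      define q where "q = n div K"
      define r where "r = n mod K"
      have n: "n = q * K + r" and "r < K"
        using K(1) by (simp_all add: q_def r_def)
      have "b n \<le> b K ^ q * b r"
        unfolding n using nonneg sub by (rule submultiplicative_power_le)
      also have "\<dots> \<le> b K ^ q * M"
        using b_le_M[OF \<open>r < K\<close>] nonneg by (simp add: mult_left_mono)
      finally have "root n (b n) \<le> root n (b K ^ q * M)"
        using that by simp
      also have "\<dots> = root n (b K ^ q) * root n M"
        by (rule real_root_mult)
      also have "root n (b K ^ q) = b K powr (real q / real n)"
        using that ge_1[of K] by (simp add: root_power_eq_powr)
      also have "\<dots> \<le> b K powr (1 / real K)"
      proof (rule powr_mono)
        have "real q * real K \<le> real n"
          unfolding n by simp
        then show "real q / real n \<le> 1 / real K"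
          using that K(1) by (simp add: field_simps)
      qed (rule ge_1)
      also have "\<dots> = root K (b K)"
        using K(1) nonneg by (simp add: root_powr_inverse)
      finally show ?thesis
        using \<open>0 < M\<close> by (simp add: mult.commute mult_right_mono real_root_ge_zero)
    qed
    have "(\<lambda>n. root n M * root K (b K)) \<longlonglongrightarrow> 1 * root K (b K)"
      using \<open>0 < M\<close> by (intro tendsto_mult LIMSEQ_root_const tendsto_const)
    then have "\<forall>\<^sub>F n in sequentially. root n M * root K (b K) < c"
      using K(2) by (intro order_tendstoD(2)) auto
    with eventually_ge_at_top[of 1]
    show "\<forall>\<^sub>F n in sequentially. root n (b n) < c"
      by eventually_elim (use upper in \<open>auto intro: le_less_trans\<close>)
  qed
  then show ?thesis
    unfolding L_def .
qed

lemma LIMSEQ_root_shift_scale: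
  fixes b :: "nat \<Rightarrow> real"
  assumes lim: "(\<lambda>k. root k (b k)) \<longlonglongrightarrow> L" and "0 < L" and pos: "\<And>k. 0 < b k" and "0 < c"
  shows "(\<lambda>k. root (k + d) (c * b k)) \<longlonglongrightarrow> L"
proof -
  have "(\<lambda>k. root (k + d) c * root k (b k) powr (real k / real (k + d))) \<longlonglongrightarrow> 1 * L powr 1"
  proof (intro tendsto_mult tendsto_powr lim)
    show "(\<lambda>k. root (k + d) c) \<longlonglongrightarrow> 1"
      using LIMSEQ_root_const[OF \<open>0 < c\<close>] by (rule LIMSEQ_ignore_initial_segment)
    show "(\<lambda>k. real k / real (k + d)) \<longlonglongrightarrow> 1"
      by real_asymp
  qed (use \<open>0 < L\<close> in simp)
  moreover have "\<forall>\<^sub>F k in sequentially.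
      root (k + d) c * root k (b k) powr (real k / real (k + d)) = root (k + d) (c * b k)"
    using eventually_ge_at_top[of 1]
  proof eventually_elim
    case (elim k)
    have "root (k + d) (b k) = root (k + d) (root k (b k) ^ k)"
      using elim pos[of k] by (simp add: real_root_pow_pos)
    also have "\<dots> = root k (b k) powr (real k / real (k + d))"
      using elim pos[of k] by (intro root_power_eq_powr) (auto intro: real_root_gt_zero)
    finally show ?case
      by (simp add: real_root_mult)
  qed
  ultimately show ?thesis
    using \<open>0 < L\<close> by (simp add: Lim_transform_eventually)
qed

section \<open>The growth rate\<close>

lemma growth_rate_eq_0:
  assumes "a N = 0"
  shows "growth_rate = 0"
proof -
  have "\<forall>\<^sub>F n in sequentially. root n (real (a n)) = 0"
    using eventually_ge_at_top[of N] by eventually_elim (simp add: a_eq_0_mono[OF assms])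
  then have "(\<lambda>n. root n (real (a n))) \<longlonglongrightarrow> 0"
    by (rule tendsto_eventually)
  then show ?thesis
    unfolding growth_rate_def by (rule limI)
qed

lemma growth_rate_eq_Inf:
  assumes "\<And>n. a n \<noteq> 0"
  shows "growth_rate = (INF k\<in>{1..}. root k (real (a (k + 2)) / 6))"
proof -
  define b where "b k = real (a (k + 2)) / 6" for k
  have ge_1: "1 \<le> b k" for k
    using a_ge_6[of "k + 2"] assms by (simp add: b_def)
  have "b (i + j) \<le> b i * b j" for i j
  proof -
    have "6 * a (i + j + 2) \<le> a (i + 2) * a (j + 2)"
      using a_submultiplicative[of "i + 2" "j + 2"] by simp
    then have "6 * real (a (i + j + 2)) \<le> real (a (i + 2)) * real (a (j + 2))"
      by (metis of_nat_le_iff of_nat_mult of_nat_numeral)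
    then show ?thesis
      unfolding b_def by simp
  qed
  with ge_1 have "(\<lambda>k. root k (b k)) \<longlonglongrightarrow> (INF k\<in>{1..}. root k (b k))"
    by (rule fekete_submultiplicative)
  moreover have "0 < (INF k\<in>{1..}. root k (b k))"
    using ge_1 by (intro less_le_trans[OF zero_less_one] cInf_greatest) auto
  moreover have "0 < b k" for k
    using ge_1 by (rule less_le_trans[OF zero_less_one])
  ultimately have "(\<lambda>k. root (k + 2) (6 * b k)) \<longlonglongrightarrow> (INF k\<in>{1..}. root k (b k))"
    by (rule LIMSEQ_root_shift_scale) simp
  then have "(\<lambda>k. root (k + 2) (real (a (k + 2)))) \<longlonglongrightarrow> (INF k\<in>{1..}. root k (b k))"
    by (simp add: b_def)
  then have "(\<lambda>n. root n (real (a n))) \<longlonglongrightarrow> (INF k\<in>{1..}. root k (b k))"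
    by (rule LIMSEQ_offset)
  then show ?thesis
    unfolding growth_rate_def b_def by (rule limI)
qed

lemma growth_rate_le:
  assumes "3 \<le> n"
  shows "growth_rate \<le> (real (a n) / 6) powr (1 / (real n - 2))"
proof (cases "\<forall>k. a k \<noteq> 0")
  case True
  have "growth_rate \<le> root (n - 2) (real (a (n - 2 + 2)) / 6)"
    unfolding growth_rate_eq_Inf[OF spec[OF True]] using assms
    by (intro cInf_lower bdd_belowI2[where m = 0]) auto
  also have "n - 2 + 2 = n"
    using assms by simp
  also have "root (n - 2) (real (a n) / 6) = (real (a n) / 6) powr (1 / (real n - 2))"
    using assms by (simp add: root_powr_inverse of_nat_diff)
  finally show ?thesis .
next
  case False
  \<comment> \<open>impossible by Thue's infinite square-free ternary words, but it suffices that
    \<open>a\<close> then vanishes eventually, making the growth rate \<open>0\<close>\<close>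
  then show ?thesis
    using growth_rate_eq_0 by auto
qed

theorem mainTheorem1:
  shows "(\<forall>m n. 2 \<le> m \<longrightarrow> 2 \<le> n \<longrightarrow>
            real (a (m + n - 2)) \<le> (1/6) * real (a m) * real (a n))
       \<and> (\<forall>n. 3 \<le> n \<longrightarrow>
            growth_rate \<le> (real (a n) / 6) powr (1 / (real n - 2)))"
proof (intro conjI allI impI)
  fix m n :: nat
  assume "2 \<le> m" "2 \<le> n"
  then have "real (6 * a (m + n - 2)) \<le> real (a m * a n)"
    by (intro of_nat_mono a_submultiplicative)
  then show "real (a (m + n - 2)) \<le> (1/6) * real (a m) * real (a n)"
    by simp
next
  fix n :: nat
  assume "3 \<le> n"
  then show "growth_rate \<le> (real (a n) / 6) powr (1 / (real n - 2))"
    by (rule growth_rate_le)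
qed

end
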